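(* For $n\ge1$ let $\pi_m(n)=\prod_{k=1,\,k\ne m}^{n}\left(1-\frac{m^2}{k^2}\right)$ and $\alpha_m^{(1)}(n)=\frac{1}{m\,\pi_m(n)}$ for $1\le m\le n$. Let $P_{2n}$ be the unique polynomial of degree at most $2n$ interpolating $y(x)=\sin x$ at the points $x=m\pi/2$, $m=-n,\dots,n$. Then $$P_{2n}'(0)=\frac{1}{\pi}\sum_{m=1}^{n}\alpha_m^{(1)}(n)\left(\sin\tfrac{m\pi}{2}-\sin\!\left(-\tfrac{m\pi}{2}\right)\right)=\frac{2}{\pi}\sum_{\substack{0\le j\\ 2j+1\le n}}(-1)^{j}\alpha_{2j+1}^{(1)}(n),$$ and $$\lim_{n\to\infty}P_{2n}'(0)=1=\sin'(0).$$ *)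

theory Defs
  imports Complex_Main "HOL-Computational_Algebra.Polynomial"
begin

definition pi_m :: "nat \<Rightarrow> nat \<Rightarrow> real" where
  "pi_m m n = (\<Prod>k\<in>{1..n} - {m}. (1 - (real m)^2 / (real k)^2))"

definition alpha1 :: "nat \<Rightarrow> nat \<Rightarrow> real" where
  "alpha1 m n = 1 / (real m * pi_m m n)"

definition interp_sin :: "nat \<Rightarrow> real poly" where
  "interp_sin n = (THE P. degree P \<le> 2 * n \<and>
      (\<forall>m::int. -int n \<le> m \<and> m \<le> int n \<longrightarrow> poly P (real_of_int m * pi / 2) = sin (real_of_int m * pi / 2)))"

end

theory Submission
  imports Defs "HOL-Real_Asymp.Real_Asymp"
begin

text \<open>
  Since the sine is odd and the nodes \<open>m\<pi>/2\<close> are symmetric about 0, the interpolant has the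
  form \<open>P(x) = x Q(x\<^sup>2)\<close>, where \<open>Q\<close> is the Lagrange interpolant of \<open>sin(\<surd>t)/\<surd>t\<close> at the
  nodes \<open>t = (k\<pi>/2)\<^sup>2\<close>, \<open>1 \<le> k \<le> n\<close>. Hence \<open>P'(0) = Q(0)\<close>, which Lagrange's formula
  evaluates to the weighted sum of the statement; only odd \<open>m\<close> contribute.

  The product \<open>\<pi>\<^sub>m(n)\<close> has the closed form \<open>(-1)^(m-1) (n-m)! (n+m)! / (2 (n!)\<^sup>2)\<close>, so
  \<open>\<alpha>\<^sub>m(n) = 2 (-1)^(m-1) r\<^sub>n(m) / m\<close> with \<open>r\<^sub>n(m) = C(2n, n+m) / C(2n, n)\<close>, and
  \<open>P'(0) = (4/\<pi>) \<Sum>\<^sub>j (-1)\<^sup>j r\<^sub>n(2j+1) / (2j+1)\<close>. The ratios \<open>r\<^sub>n(m)\<close> are nonnegative,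
  decrease in \<open>m\<close> and tend to 1 as \<open>n \<rightarrow> \<infinity>\<close>. Since every tail of an alternating sum with
  decreasing terms is bounded by its first term, these sums converge to Leibniz's series
  \<open>\<Sum>\<^sub>j (-1)\<^sup>j / (2j+1) = \<pi>/4\<close>, so \<open>P'(0) \<rightarrow> 1\<close>.
\<close>

section \<open>Lagrange interpolation\<close>

definition lagrange_interp :: "'a::field set \<Rightarrow> ('a \<Rightarrow> 'a) \<Rightarrow> 'a poly" where
  "lagrange_interp A f =
     (\<Sum>a\<in>A. smult (f a / (\<Prod>b\<in>A - {a}. a - b)) (\<Prod>b\<in>A - {a}. [:- b, 1:]))"

lemma degree_lagrange_interp:
  assumes "finite A"
  shows "degree (lagrange_interp A f) \<le> card A - 1"
  unfolding lagrange_interp_def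
proof (rule degree_sum_le[OF assms])
  fix a assume "a \<in> A"
  have "degree (\<Prod>b\<in>A - {a}. [:- b, 1:]) \<le> (\<Sum>b\<in>A - {a}. degree [:- b, 1:])"
    using degree_prod_sum_le[of "A - {a}" "\<lambda>b. [:- b, 1:]"] assms by (simp add: o_def)
  also have "\<dots> = card A - 1"
    using \<open>a \<in> A\<close> assms by simp
  finally show "degree (smult (f a / (\<Prod>b\<in>A - {a}. a - b)) (\<Prod>b\<in>A - {a}. [:- b, 1:])) \<le> card A - 1"
    using degree_smult_le order_trans by blast
qed

lemma poly_lagrange_interp:
  assumes "finite A" "a \<in> A"
  shows "poly (lagrange_interp A f) a = f a"
proof -
  define summand where "summand c = f c / (\<Prod>b\<in>A - {c}. c - b) * (\<Prod>b\<in>A - {c}. a - b)" for c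
  have "summand c = 0" if "c \<in> A - {a}" for c
    using that assms unfolding summand_def by (subst prod_zero) auto
  then have "(\<Sum>c\<in>A - {a}. summand c) = 0"
    by (rule sum.neutral[OF ballI])
  moreover have "summand a = f a"
    using assms by (simp add: summand_def prod_zero_iff)
  moreover have "poly (lagrange_interp A f) a = summand a + (\<Sum>c\<in>A - {a}. summand c)"
    unfolding summand_def using assms
    by (simp add: lagrange_interp_def poly_sum poly_prod sum.remove)
  ultimately show ?thesis
    by simp
qed

lemma poly_lagrange_interp_0:
  "poly (lagrange_interp A f) 0 = (\<Sum>a\<in>A. f a * (\<Prod>b\<in>A - {a}. b / (b - a)))"
  unfolding lagrange_interp_def poly_sum
proof (rule sum.cong[OF refl])
  fix a
  have "poly (smult (f a / (\<Prod>b\<in>A - {a}. a - b)) (\<Prod>b\<in>A - {a}. [:- b, 1:])) 0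
      = f a * ((\<Prod>b\<in>A - {a}. - b) / (\<Prod>b\<in>A - {a}. a - b))"
    by (simp add: poly_prod)
  also have "\<dots> = f a * (\<Prod>b\<in>A - {a}. b / (b - a))"
    by (simp add: prod_dividef[symmetric] minus_divide_right)
  finally show "poly (smult (f a / (\<Prod>b\<in>A - {a}. a - b)) (\<Prod>b\<in>A - {a}. [:- b, 1:])) 0
      = f a * (\<Prod>b\<in>A - {a}. b / (b - a))" .
qed

section \<open>Interpolating odd functions\<close>

definition odd_interp :: "(real \<Rightarrow> real) \<Rightarrow> real set \<Rightarrow> real poly" where
  "odd_interp f X =
     [:0, 1:] * (lagrange_interp (power2 ` X) (\<lambda>t. f (sqrt t) / sqrt t) \<circ>\<^sub>p [:0, 0, 1:])"

lemma poly_odd_interp: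
  "poly (odd_interp f X) x = x * poly (lagrange_interp (power2 ` X) (\<lambda>t. f (sqrt t) / sqrt t)) (x\<^sup>2)"
  by (simp add: odd_interp_def poly_pcompose power2_eq_square)

lemma degree_odd_interp:
  assumes "finite X"
  shows "degree (odd_interp f X) \<le> 2 * card X"
proof (cases "X = {}")
  case True
  then show ?thesis
    by (simp add: odd_interp_def lagrange_interp_def)
next
  case False
  let ?L = "lagrange_interp (power2 ` X) (\<lambda>t. f (sqrt t) / sqrt t)"
  have "degree ?L \<le> card X - 1"
    using degree_lagrange_interp[of "power2 ` X"] card_image_le[of X power2] assms
    by (meson diff_le_mono finite_imageI order_trans)
  have "degree (odd_interp f X) \<le> degree [:0, 1::real:] + degree (?L \<circ>\<^sub>p [:0, 0, 1:])"
    unfolding odd_interp_def by (rule degree_mult_le)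
  also have "\<dots> = 1 + degree ?L * 2"
    by (simp only: degree_pcompose) simp
  also have "\<dots> \<le> 1 + (card X - 1) * 2"
    using \<open>degree ?L \<le> card X - 1\<close> by simp
  finally have "degree (odd_interp f X) \<le> 1 + (card X - 1) * 2" .
  moreover have "card X \<ge> 1"
    using False assms by (simp add: Suc_le_eq card_gt_0_iff)
  ultimately show ?thesis
    by linarith
qed

lemma odd_interp_interpolates:
  assumes odd: "\<And>x. f (- x) = - f x" and "finite X" and node: "x = 0 \<or> \<bar>x\<bar> \<in> X"
  shows "poly (odd_interp f X) x = f x"
proof (cases "x = 0")
  case True
  then show ?thesis
    using odd[of 0] by (simp add: poly_odd_interp)
next
  case False
  then have "x\<^sup>2 \<in> power2 ` X"
    using node by (metis image_eqI power2_abs)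
  then have "poly (odd_interp f X) x = x * (f \<bar>x\<bar> / \<bar>x\<bar>)"
    using \<open>finite X\<close> by (simp add: poly_odd_interp poly_lagrange_interp)
  also have "\<dots> = f x"
    using False odd[of x] by (cases "x > 0") auto
  finally show ?thesis .
qed

lemma pderiv_odd_interp_0:
  assumes "finite X" and pos: "X \<subseteq> {0<..}"
  shows "poly (pderiv (odd_interp f X)) 0 = (\<Sum>x\<in>X. f x / x * (\<Prod>y\<in>X - {x}. y\<^sup>2 / (y\<^sup>2 - x\<^sup>2)))"
proof -
  have inj: "inj_on power2 X"
    using pos by (intro inj_onI) (metis power2_eq_iff_nonneg subsetD greaterThan_iff less_imp_le)
  have "poly (pderiv (odd_interp f X)) 0 = poly (lagrange_interp (power2 ` X) (\<lambda>t. f (sqrt t) / sqrt t)) 0"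
    by (simp add: odd_interp_def pderiv_mult pderiv_pCons poly_pcompose)
  also have "\<dots> = (\<Sum>x\<in>X. f (sqrt (x\<^sup>2)) / sqrt (x\<^sup>2) * (\<Prod>t\<in>power2 ` X - {x\<^sup>2}. t / (t - x\<^sup>2)))"
    by (simp add: poly_lagrange_interp_0 sum.reindex[OF inj])
  also have "\<dots> = (\<Sum>x\<in>X. f x / x * (\<Prod>y\<in>X - {x}. y\<^sup>2 / (y\<^sup>2 - x\<^sup>2)))"
  proof (rule sum.cong[OF refl])
    fix x assume "x \<in> X"
    then have "power2 ` X - {x\<^sup>2} = power2 ` (X - {x})"
      using inj by (simp add: inj_on_image_set_diff)
    moreover have "inj_on power2 (X - {x})"
      using inj by (rule inj_on_subset) blast
    ultimately show "f (sqrt (x\<^sup>2)) / sqrt (x\<^sup>2) * (\<Prod>t\<in>power2 ` X - {x\<^sup>2}. t / (t - x\<^sup>2))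
        = f x / x * (\<Prod>y\<in>X - {x}. y\<^sup>2 / (y\<^sup>2 - x\<^sup>2))"
      using pos \<open>x \<in> X\<close> by (auto simp: prod.reindex)
  qed
  finally show ?thesis .
qed

definition half_pi_nodes :: "nat \<Rightarrow> real set" where
  "half_pi_nodes n = (\<lambda>k. real k * pi / 2) ` {1..n}"

lemma inj_half_pi_multiple: "inj (\<lambda>k::nat. real k * pi / 2)"
  by (rule injI) simp

lemma interp_sin_eqI:
  assumes "degree P \<le> 2 * n"
    and "\<And>m::int. - int n \<le> m \<Longrightarrow> m \<le> int n \<Longrightarrow> poly P (of_int m * pi / 2) = sin (of_int m * pi / 2)"
  shows "interp_sin n = P"
  unfolding interp_sin_def
proof (rule the_equality)
  fix Q :: "real poly"
  assume Q: "degree Q \<le> 2 * n \<and>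
    (\<forall>m::int. - int n \<le> m \<and> m \<le> int n \<longrightarrow> poly Q (of_int m * pi / 2) = sin (of_int m * pi / 2))"
  let ?A = "(\<lambda>m::int. of_int m * pi / 2) ` {- int n..int n}"
  have "card ?A = 2 * n + 1"
    by (subst card_image) (auto intro: inj_onI)
  then show "Q = P"
    using Q assms by (intro poly_eqI_degree[of ?A]) auto
qed (use assms in auto)

lemma interp_sin_eq_odd_interp: "interp_sin n = odd_interp sin (half_pi_nodes n)"
proof (rule interp_sin_eqI)
  have "card (half_pi_nodes n) \<le> n"
    unfolding half_pi_nodes_def using card_image_le[of "{1..n}"] by fastforce
  then show "degree (odd_interp sin (half_pi_nodes n)) \<le> 2 * n"
    using degree_odd_interp[of "half_pi_nodes n" sin] by (simp add: half_pi_nodes_def)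
next
  fix m :: int
  assume "- int n \<le> m" "m \<le> int n"
  then have "m = 0 \<or> \<bar>of_int m * pi / 2\<bar> \<in> half_pi_nodes n"
    unfolding half_pi_nodes_def
    by (auto simp: abs_mult image_iff intro!: bexI[of _ "nat \<bar>m\<bar>"])
  then show "poly (odd_interp sin (half_pi_nodes n)) (of_int m * pi / 2) = sin (of_int m * pi / 2)"
    by (intro odd_interp_interpolates) (auto simp: half_pi_nodes_def)
qed

lemma half_pi_node_ratio:
  assumes "j \<noteq> 0"
  shows "(real j * pi / 2)\<^sup>2 / ((real j * pi / 2)\<^sup>2 - (real k * pi / 2)\<^sup>2)
    = 1 / (1 - (real k)\<^sup>2 / (real j)\<^sup>2)"
proof -
  have square: "(real i * pi / 2)\<^sup>2 = (pi / 2)\<^sup>2 * (real i)\<^sup>2" for i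
    by (simp add: power_mult_distrib power_divide)
  have "(real j * pi / 2)\<^sup>2 / ((real j * pi / 2)\<^sup>2 - (real k * pi / 2)\<^sup>2)
      = (pi / 2)\<^sup>2 * (real j)\<^sup>2 / ((pi / 2)\<^sup>2 * ((real j)\<^sup>2 - (real k)\<^sup>2))"
    by (simp only: square right_diff_distrib)
  also have "\<dots> = (real j)\<^sup>2 / ((real j)\<^sup>2 - (real k)\<^sup>2)"
    by (rule mult_divide_mult_cancel_left) simp
  also have "\<dots> = 1 / (((real j)\<^sup>2 - (real k)\<^sup>2) / (real j)\<^sup>2)"
    by simp
  also have "\<dots> = 1 / (1 - (real k)\<^sup>2 / (real j)\<^sup>2)"
    using assms by (simp add: diff_divide_distrib)
  finally show ?thesis .
qed

lemma pderiv_interp_sin_0: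
  "poly (pderiv (interp_sin n)) 0
     = (1 / pi) * (\<Sum>m=1..n. alpha1 m n * (sin (real m * pi / 2) - sin (- (real m * pi / 2))))"
proof -
  let ?x = "\<lambda>k::nat. real k * pi / 2"
  have inj: "inj_on ?x A" for A
    using inj_half_pi_multiple by (rule inj_on_subset) simp
  have "poly (pderiv (interp_sin n)) 0
      = (\<Sum>x\<in>?x ` {1..n}. sin x / x * (\<Prod>y\<in>?x ` {1..n} - {x}. y\<^sup>2 / (y\<^sup>2 - x\<^sup>2)))"
    unfolding interp_sin_eq_odd_interp half_pi_nodes_def by (rule pderiv_odd_interp_0) auto
  also have "\<dots> = (\<Sum>k=1..n. sin (?x k) / ?x k * (\<Prod>y\<in>?x ` {1..n} - {?x k}. y\<^sup>2 / (y\<^sup>2 - (?x k)\<^sup>2)))"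
    by (simp only: sum.reindex[OF inj] o_def)
  also have "\<dots> = (\<Sum>k=1..n. sin (?x k) / ?x k / pi_m k n)"
  proof (rule sum.cong[OF refl])
    fix k
    have "?x ` {1..n} - {?x k} = ?x ` ({1..n} - {k})"
      using inj_half_pi_multiple by (simp add: image_set_diff)
    then have "(\<Prod>y\<in>?x ` {1..n} - {?x k}. y\<^sup>2 / (y\<^sup>2 - (?x k)\<^sup>2))
        = (\<Prod>j\<in>{1..n} - {k}. 1 / (1 - (real k)\<^sup>2 / (real j)\<^sup>2))"
      by (simp add: prod.reindex[OF inj] half_pi_node_ratio)
    also have "\<dots> = 1 / pi_m k n"
      by (simp add: pi_m_def prod_dividef)
    finally show "sin (?x k) / ?x k * (\<Prod>y\<in>?x ` {1..n} - {?x k}. y\<^sup>2 / (y\<^sup>2 - (?x k)\<^sup>2))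
        = sin (?x k) / ?x k / pi_m k n"
      by simp
  qed
  also have "\<dots> = (1 / pi) * (\<Sum>m=1..n. alpha1 m n * (sin (real m * pi / 2) - sin (- (real m * pi / 2))))"
    by (simp add: sum_distrib_left alpha1_def mult_ac)
  finally show ?thesis .
qed

lemma sum_sin_half_pi_multiples:
  "(\<Sum>m=1..n. g m * sin (real m * pi / 2)) = (\<Sum>j\<in>{j. 2 * j + 1 \<le> n}. (-1) ^ j * g (2 * j + 1))"
proof -
  have "(\<Sum>m=1..n. g m * sin (real m * pi / 2)) = (\<Sum>m\<in>(\<lambda>j. 2 * j + 1) ` {j. 2 * j + 1 \<le> n}. g m * sin (real m * pi / 2))"
  proof (rule sum.mono_neutral_right)
    show "\<forall>m\<in>{1..n} - (\<lambda>j. 2 * j + 1) ` {j. 2 * j + 1 \<le> n}. g m * sin (real m * pi / 2) = 0"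
    proof
      fix m assume m: "m \<in> {1..n} - (\<lambda>j. 2 * j + 1) ` {j. 2 * j + 1 \<le> n}"
      have "even m"
      proof (rule ccontr)
        assume "odd m"
        then obtain j where "m = 2 * j + 1"
          by (rule oddE)
        with m show False
          by auto
      qed
      then obtain i where "m = 2 * i"
        by (rule evenE)
      then show "g m * sin (real m * pi / 2) = 0"
        by simp
    qed
  qed auto
  also have "\<dots> = (\<Sum>j\<in>{j. 2 * j + 1 \<le> n}. g (2 * j + 1) * sin (real (2 * j + 1) * pi / 2))"
    by (rule sum.reindex[OF inj_onI, unfolded o_def]) simp
  also have "\<dots> = (\<Sum>j\<in>{j. 2 * j + 1 \<le> n}. (-1) ^ j * g (2 * j + 1))"
    by (intro sum.cong refl) (metis Suc_eq_plus1 sin_cos_npi mult.commute)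
  finally show ?thesis .
qed

section \<open>Closed form of the weights\<close>

lemma prod_square_diff_below:
  assumes "n < m"
  shows "(\<Prod>k=1..n. (real m)\<^sup>2 - (real k)\<^sup>2) * fact (m - Suc n) * real m = fact (m + n)"
  using assms
proof (induction n)
  case 0
  then show ?case
    by (simp add: fact_reduce[of m])
next
  case (Suc n)
  have fact_eq: "fact (m - Suc n) = (real m - real n - 1) * fact (m - Suc (Suc n))"
    using Suc.prems by (simp add: fact_reduce[of "m - Suc n"] of_nat_diff Suc_diff_Suc)
  have prod_eq: "(\<Prod>k=1..Suc n. (real m)\<^sup>2 - (real k)\<^sup>2)
      = (\<Prod>k=1..n. (real m)\<^sup>2 - (real k)\<^sup>2) * ((real m - real n - 1) * (real m + real n + 1))"
    by (simp add: prod.nat_ivl_Suc' power2_eq_square algebra_simps)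
  have "(\<Prod>k=1..Suc n. (real m)\<^sup>2 - (real k)\<^sup>2) * fact (m - Suc (Suc n)) * real m
      = (real m + real n + 1) * ((\<Prod>k=1..n. (real m)\<^sup>2 - (real k)\<^sup>2) * fact (m - Suc n) * real m)"
    unfolding prod_eq fact_eq by (simp only: mult_ac)
  also have "\<dots> = fact (m + Suc n)"
    using Suc by (simp add: algebra_simps)
  finally show ?case .
qed

lemma prod_square_diff:
  assumes "1 \<le> m" "m \<le> n"
  shows "(\<Prod>k\<in>{1..n} - {m}. (real k)\<^sup>2 - (real m)\<^sup>2) * (2 * (real m)\<^sup>2)
    = (-1) ^ (m - 1) * fact (n - m) * fact (n + m)"
  using assms(2)
proof (induction n rule: dec_induct)
  case base
  have "{1..m} - {m} = {1..m - 1}"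
    by auto
  moreover have "(\<Prod>k=1..m - 1. (real k)\<^sup>2 - (real m)\<^sup>2)
      = (-1) ^ (m - 1) * (\<Prod>k=1..m - 1. (real m)\<^sup>2 - (real k)\<^sup>2)"
    using prod_diff_swap[of "\<lambda>k. (real k)\<^sup>2" "\<lambda>k. (real m)\<^sup>2" "{1..m - 1}"] by simp
  ultimately have "(\<Prod>k\<in>{1..m} - {m}. (real k)\<^sup>2 - (real m)\<^sup>2) * real m
      = (-1) ^ (m - 1) * fact (2 * m - 1)"
    using prod_square_diff_below[of "m - 1" m] assms(1) by (simp add: mult_2)
  moreover have "fact (2 * m) = 2 * real m * fact (2 * m - 1)"
    using assms(1) by (simp add: fact_reduce[of "2 * m"])
  ultimately show ?case
    by (simp add: power2_eq_square mult_2[symmetric] algebra_simps)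
next
  case (step n)
  have "{1..Suc n} - {m} = insert (Suc n) ({1..n} - {m})"
    using step by auto
  then have "(\<Prod>k\<in>{1..Suc n} - {m}. (real k)\<^sup>2 - (real m)\<^sup>2)
      = (real (Suc n - m) * real (Suc n + m)) * (\<Prod>k\<in>{1..n} - {m}. (real k)\<^sup>2 - (real m)\<^sup>2)"
    using step by (simp add: of_nat_diff power2_eq_square algebra_simps)
  moreover have "fact (Suc n - m) = real (Suc n - m) * fact (n - m)"
    using step by (simp add: Suc_diff_le)
  ultimately show ?case
    using step.IH by (simp add: algebra_simps)
qed

lemma prod_square_remove:
  assumes "m \<in> {1..n}"
  shows "(\<Prod>k\<in>{1..n} - {m}. (real k)\<^sup>2) * (real m)\<^sup>2 = (fact n)\<^sup>2"
proof -
  have "(fact n)\<^sup>2 = (\<Prod>k\<in>{1..n}. (real k)\<^sup>2)"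
    by (simp add: fact_prod of_nat_prod prod_power_distrib)
  also have "\<dots> = (real m)\<^sup>2 * (\<Prod>k\<in>{1..n} - {m}. (real k)\<^sup>2)"
    using assms by (simp add: prod.remove)
  finally show ?thesis
    by (simp add: mult.commute)
qed

lemma pi_m_eq:
  assumes "1 \<le> m" "m \<le> n"
  shows "pi_m m n = (-1) ^ (m - 1) * fact (n - m) * fact (n + m) / (2 * (fact n)\<^sup>2)"
proof -
  have "pi_m m n = (\<Prod>k\<in>{1..n} - {m}. ((real k)\<^sup>2 - (real m)\<^sup>2) / (real k)\<^sup>2)"
    unfolding pi_m_def by (intro prod.cong refl) (auto simp: field_simps)
  also have "\<dots> = (\<Prod>k\<in>{1..n} - {m}. (real k)\<^sup>2 - (real m)\<^sup>2) / (\<Prod>k\<in>{1..n} - {m}. (real k)\<^sup>2)"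
    by (rule prod_dividef)
  also have "\<dots> = ((\<Prod>k\<in>{1..n} - {m}. (real k)\<^sup>2 - (real m)\<^sup>2) * (2 * (real m)\<^sup>2))
      / ((\<Prod>k\<in>{1..n} - {m}. (real k)\<^sup>2) * (real m)\<^sup>2 * 2)"
    using assms by (simp add: mult.assoc)
  also have "\<dots> = (-1) ^ (m - 1) * fact (n - m) * fact (n + m) / (2 * (fact n)\<^sup>2)"
    using assms prod_square_remove[of m n] unfolding prod_square_diff[OF assms] by simp
  finally show ?thesis .
qed

lemma Suc_times_choose_Suc: "Suc k * (n choose Suc k) = (n - k) * (n choose k)"
proof (cases n)
  case (Suc n')
  then show ?thesis
    using Suc_times_binomial[of k n'] binomial_absorb_comp[of n k] by simp
qed simp

text \<open>\<open>binom_ratio n m\<close> vanishes for \<open>m > n\<close>, so sums of it over \<open>m \<le> n\<close> may be extended freely.\<close>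

definition binom_ratio :: "nat \<Rightarrow> nat \<Rightarrow> real" where
  "binom_ratio n m = real ((2 * n) choose (n + m)) / real ((2 * n) choose n)"

lemma binom_ratio_eq:
  assumes "m \<le> n"
  shows "binom_ratio n m = (fact n)\<^sup>2 / (fact (n - m) * fact (n + m))"
  using assms by (simp add: binom_ratio_def binomial_fact mult_2 power2_eq_square)

lemma alpha1_eq:
  assumes "1 \<le> m" "m \<le> n"
  shows "alpha1 m n = 2 * (-1) ^ (m - 1) * binom_ratio n m / real m"
  using assms by (simp add: alpha1_def pi_m_eq binom_ratio_eq field_simps)

lemma binom_ratio_nonneg: "0 \<le> binom_ratio n m"
  by (simp add: binom_ratio_def)

lemma binom_ratio_Suc_le: "binom_ratio n (Suc m) \<le> binom_ratio n m"
proof (cases "n + Suc m \<le> 2 * n")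
  case True
  then have "(2 * n) choose (n + Suc m) \<le> (2 * n) choose (n + m)"
    by (intro binomial_antimono) auto
  then show ?thesis
    by (simp add: binom_ratio_def divide_right_mono)
next
  case False
  then show ?thesis
    by (simp add: binom_ratio_def binomial_eq_0)
qed

lemma binom_ratio_Suc:
  "binom_ratio n (Suc m) = binom_ratio n m * ((real n - real m) / (real n + real m + 1))"
proof -
  have "(real n + real m + 1) * real ((2 * n) choose (n + Suc m))
      = (real n - real m) * real ((2 * n) choose (n + m))"
  proof (cases "m \<le> n")
    case True
    have "2 * n - (n + m) = n - m"
      by simp
    then have "Suc (n + m) * ((2 * n) choose Suc (n + m)) = (n - m) * ((2 * n) choose (n + m))"
      using Suc_times_choose_Suc[of "n + m" "2 * n"] by (simp only:)
    then have "real (Suc (n + m)) * real ((2 * n) choose Suc (n + m))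
        = real (n - m) * real ((2 * n) choose (n + m))"
      by (simp only: of_nat_mult[symmetric])
    then show ?thesis
      using True by (simp add: of_nat_diff algebra_simps)
  next
    case False
    then show ?thesis
      by (simp add: binomial_eq_0)
  qed
  then have "real ((2 * n) choose (n + Suc m))
      = real ((2 * n) choose (n + m)) * ((real n - real m) / (real n + real m + 1))"
    by (simp add: divide_simps add_pos_pos mult.commute)
  then show ?thesis
    by (simp add: binom_ratio_def)
qed

lemma tendsto_binom_ratio: "(\<lambda>n. binom_ratio n m) \<longlonglongrightarrow> 1"
proof (induction m)
  case 0
  then show ?case
    by (simp add: binom_ratio_def)
next
  case (Suc m)
  have "(\<lambda>n. (real n - real m) / (real n + real m + 1)) \<longlonglongrightarrow> 1"
    by real_asymp
  with Suc show ?case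
    unfolding binom_ratio_Suc using tendsto_mult by fastforce
qed

section \<open>Alternating sums with varying terms\<close>

lemma abs_alternating_sum_le:
  fixes b :: "nat \<Rightarrow> real"
  assumes nonneg: "\<And>j. 0 \<le> b j" and antimono: "\<And>j. b (Suc j) \<le> b j"
  shows "\<bar>\<Sum>j=J..<N. (-1) ^ j * b j\<bar> \<le> b J"
proof -
  have bounds: "0 \<le> (-1) ^ J * (\<Sum>j=J..<J + k. (-1) ^ j * b j) \<and> (-1) ^ J * (\<Sum>j=J..<J + k. (-1) ^ j * b j) \<le> b J"
    for k
  proof (induction k arbitrary: J)
    case 0
    then show ?case
      using nonneg by simp
  next
    case (Suc k)
    have "(-1) ^ J * (\<Sum>j=J..<J + Suc k. (-1) ^ j * b j)
        = b J - (-1) ^ Suc J * (\<Sum>j=Suc J..<Suc J + k. (-1) ^ j * b j)"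
      by (simp add: sum.atLeast_Suc_lessThan algebra_simps)
    then show ?case
      using Suc.IH[of "Suc J"] antimono[of J] by auto
  qed
  show ?thesis
  proof (cases "J \<le> N")
    case True
    then obtain k where "N = J + k"
      using le_Suc_ex by blast
    have "\<bar>(-1) ^ J * (\<Sum>j=J..<J + k. (-1) ^ j * b j)\<bar> \<le> b J"
      using bounds[of k] by (simp add: abs_of_nonneg)
    then show ?thesis
      using \<open>N = J + k\<close> by (simp add: abs_mult power_abs)
  next
    case False
    then show ?thesis
      using nonneg by simp
  qed
qed

lemma tendsto_alternating_sum:
  fixes b :: "nat \<Rightarrow> nat \<Rightarrow> real"
  assumes nonneg: "\<And>n j. 0 \<le> b n j" and antimono: "\<And>n j. b n (Suc j) \<le> b n j"
    and lim: "\<And>j. (\<lambda>n. b n j) \<longlonglongrightarrow> a j" and "a \<longlonglongrightarrow> 0"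
  shows "(\<lambda>n. \<Sum>j<n. (-1) ^ j * b n j) \<longlonglongrightarrow> (\<Sum>j. (-1) ^ j * a j)"
proof (rule tendstoI)
  fix e :: real
  assume "0 < e"
  let ?s = "\<Sum>j. (-1) ^ j * a j"
  have "0 \<le> a j" for j
    using nonneg by (intro LIMSEQ_le_const[OF lim]) auto
  moreover have "a (Suc j) \<le> a j" for j
    using antimono by (intro LIMSEQ_le[OF lim lim]) auto
  ultimately have "(\<lambda>J. \<Sum>j<J. (-1) ^ j * a j) \<longlonglongrightarrow> ?s"
    using summable_Leibniz'(1)[OF \<open>a \<longlonglongrightarrow> 0\<close>] by (intro summable_LIMSEQ) blast
  then have "\<forall>\<^sub>F J in sequentially. dist (\<Sum>j<J. (-1) ^ j * a j) ?s < e / 3 \<and> a J < e / 3"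
    using \<open>a \<longlonglongrightarrow> 0\<close> \<open>0 < e\<close> by (intro eventually_conj tendstoD order_tendstoD(2)) auto
  then obtain J where J: "dist (\<Sum>j<J. (-1) ^ j * a j) ?s < e / 3" "a J < e / 3"
    unfolding eventually_sequentially by blast
  have "\<forall>\<^sub>F n in sequentially. dist (\<Sum>j<J. (-1) ^ j * b n j) (\<Sum>j<J. (-1) ^ j * a j) < e / 3"
    using \<open>0 < e\<close> by (intro tendstoD tendsto_sum tendsto_mult tendsto_const lim) auto
  moreover have "\<forall>\<^sub>F n in sequentially. b n J < e / 3"
    using lim J(2) by (rule order_tendstoD(2))
  moreover have "\<forall>\<^sub>F n in sequentially. J \<le> n"
    by (rule eventually_ge_at_top)
  ultimately show "\<forall>\<^sub>F n in sequentially. dist (\<Sum>j<n. (-1) ^ j * b n j) ?s < e"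
  proof eventually_elim
    \<comment> \<open>The first \<open>J\<close> terms converge; the rest is at most \<open>b n J \<approx> a J\<close>.\<close>
    case (elim n)
    let ?A = "\<Sum>j<J. (-1) ^ j * b n j" and ?A' = "\<Sum>j<J. (-1) ^ j * a j"
      and ?T = "\<Sum>j=J..<n. (-1) ^ j * b n j"
    have "(\<Sum>j<n. (-1) ^ j * b n j) - ?s = (?A - ?A') + (?A' - ?s) + ?T"
      using sum.atLeastLessThan_concat[of 0 J n "\<lambda>j. (-1) ^ j * b n j"] elim(3)
      by (simp add: atLeast0LessThan)
    then have "dist (\<Sum>j<n. (-1) ^ j * b n j) ?s = \<bar>(?A - ?A') + (?A' - ?s) + ?T\<bar>"
      unfolding dist_real_def by (rule arg_cong)
    also have "\<dots> \<le> \<bar>(?A - ?A') + (?A' - ?s)\<bar> + \<bar>?T\<bar>"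
      by (rule abs_triangle_ineq)
    also have "\<dots> \<le> dist ?A ?A' + dist ?A' ?s + \<bar>?T\<bar>"
      unfolding dist_real_def by (intro add_right_mono abs_triangle_ineq)
    finally have "dist (\<Sum>j<n. (-1) ^ j * b n j) ?s \<le> dist ?A ?A' + dist ?A' ?s + \<bar>?T\<bar>" .
    moreover have "\<bar>?T\<bar> \<le> b n J"
      using nonneg antimono by (rule abs_alternating_sum_le)
    ultimately show ?case
      using elim J(1) by linarith
  qed
qed

lemma sum_alpha1_sin_diff:
  "(\<Sum>m=1..n. alpha1 m n * (sin (real m * pi / 2) - sin (- (real m * pi / 2))))
    = 2 * (\<Sum>j\<in>{j. 2 * j + 1 \<le> n}. (-1) ^ j * alpha1 (2 * j + 1) n)"
proof -
  have "(\<Sum>m=1..n. alpha1 m n * (sin (real m * pi / 2) - sin (- (real m * pi / 2))))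
      = (\<Sum>m=1..n. 2 * alpha1 m n * sin (real m * pi / 2))"
    by (intro sum.cong refl) simp
  also have "\<dots> = (\<Sum>j\<in>{j. 2 * j + 1 \<le> n}. (-1) ^ j * (2 * alpha1 (2 * j + 1) n))"
    by (rule sum_sin_half_pi_multiples)
  finally show ?thesis
    by (simp add: sum_distrib_left mult_ac)
qed

lemma sum_odd_alpha1:
  "(\<Sum>j\<in>{j. 2 * j + 1 \<le> n}. (-1) ^ j * alpha1 (2 * j + 1) n)
    = 2 * (\<Sum>j<n. (-1) ^ j * (binom_ratio n (2 * j + 1) / real (2 * j + 1)))"
proof -
  have "(\<Sum>j\<in>{j. 2 * j + 1 \<le> n}. (-1) ^ j * alpha1 (2 * j + 1) n)
      = (\<Sum>j\<in>{j. 2 * j + 1 \<le> n}. 2 * ((-1) ^ j * (binom_ratio n (2 * j + 1) / real (2 * j + 1))))"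
    by (intro sum.cong refl) (simp add: alpha1_eq del: of_nat_Suc)
  also have "\<dots> = (\<Sum>j<n. 2 * ((-1) ^ j * (binom_ratio n (2 * j + 1) / real (2 * j + 1))))"
    by (rule sum.mono_neutral_left) (auto simp: binom_ratio_def binomial_eq_0)
  finally show ?thesis
    by (simp add: sum_distrib_left)
qed

lemma tendsto_pderiv_interp_sin_0: "(\<lambda>n. poly (pderiv (interp_sin n)) 0) \<longlonglongrightarrow> 1"
proof -
  define S where "S n = (\<Sum>j<n. (-1) ^ j * (binom_ratio n (2 * j + 1) / real (2 * j + 1)))" for n
  have "S \<longlonglongrightarrow> (\<Sum>j. (-1) ^ j * (1 / real (2 * j + 1)))"
    unfolding S_def
  proof (rule tendsto_alternating_sum)
    show "binom_ratio n (2 * Suc j + 1) / real (2 * Suc j + 1) \<le> binom_ratio n (2 * j + 1) / real (2 * j + 1)"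
      for n j
      using binom_ratio_Suc_le[of n "2 * j + 1"] binom_ratio_Suc_le[of n "Suc (2 * j + 1)"]
      by (intro frac_le) (auto simp: binom_ratio_nonneg)
    show "(\<lambda>n. binom_ratio n (2 * j + 1) / real (2 * j + 1)) \<longlonglongrightarrow> 1 / real (2 * j + 1)" for j
      by (intro tendsto_divide tendsto_binom_ratio tendsto_const) simp
    show "(\<lambda>j. 1 / real (2 * j + 1)) \<longlonglongrightarrow> 0"
      by real_asymp
  qed (simp add: binom_ratio_nonneg)
  also have "(\<Sum>j. (-1) ^ j * (1 / real (2 * j + 1))) = pi / 4"
    by (simp add: pi_series mult.commute)
  finally have "(\<lambda>n. 4 / pi * S n) \<longlonglongrightarrow> 4 / pi * (pi / 4)"
    by (rule tendsto_mult_left)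
  moreover have "poly (pderiv (interp_sin n)) 0 = 4 / pi * S n" for n
    unfolding pderiv_interp_sin_0 sum_alpha1_sin_diff sum_odd_alpha1 S_def by simp
  ultimately show ?thesis
    by simp
qed

theorem mainTheorem7:
  shows "(\<forall>n::nat. n \<ge> 1 \<longrightarrow>
            poly (pderiv (interp_sin n)) 0
              = (1 / pi) * (\<Sum>m=1..n. alpha1 m n * (sin (real m * pi / 2) - sin (- (real m * pi / 2))))
          \<and> (1 / pi) * (\<Sum>m=1..n. alpha1 m n * (sin (real m * pi / 2) - sin (- (real m * pi / 2))))
              = (2 / pi) * (\<Sum>j\<in>{j::nat. 2 * j + 1 \<le> n}. (-1) ^ j * alpha1 (2 * j + 1) n))
       \<and> (\<lambda>n. poly (pderiv (interp_sin n)) 0) \<longlonglongrightarrow> 1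
       \<and> (sin has_real_derivative 1) (at 0)"
proof (intro conjI allI impI)
  fix n :: nat
  show "poly (pderiv (interp_sin n)) 0
      = (1 / pi) * (\<Sum>m=1..n. alpha1 m n * (sin (real m * pi / 2) - sin (- (real m * pi / 2))))"
    by (rule pderiv_interp_sin_0)
  show "(1 / pi) * (\<Sum>m=1..n. alpha1 m n * (sin (real m * pi / 2) - sin (- (real m * pi / 2))))
      = (2 / pi) * (\<Sum>j\<in>{j::nat. 2 * j + 1 \<le> n}. (-1) ^ j * alpha1 (2 * j + 1) n)"
    unfolding sum_alpha1_sin_diff by simp
next
  show "(\<lambda>n. poly (pderiv (interp_sin n)) 0) \<longlonglongrightarrow> 1"
    by (rule tendsto_pderiv_interp_sin_0)
  show "(sin has_real_derivative 1) (at 0)"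
    using DERIV_sin[of 0] by simp
qed

end
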